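(* Let $\beta,\delta,K,\mu>0$ and set $s^*=\mu/\delta$. Define $$a=2\beta,\qquad b=3\beta s^*-K\beta,\qquad c=2\beta s^{*2}+2K\delta-2K\beta s^*,\qquad d=4K\delta s^*,$$ and $$\Delta=b^2c^2-4ac^3-4b^3d-27a^2d^2+18abcd.$$ If $\Delta<0$, then the cubic equation $am^3+bm^2+cm+d=0$ has no positive root $m$.
   Context: This cubic determines the male component $m^*$ of a possible interior equilibrium, with female component $f^*>0$, of the system $$f'=\tfrac12 fm\beta L-\delta f,\qquad m'=\big(\tfrac12 fm+fs\big)\beta L-\delta m,\qquad s'=\mu-\delta s,\qquad L=1-\frac{f+m+s}{K}.$$ *)

theory Defs
  imports Complex_Main
begin

end

theory Submission
  imports Defs
begin

(* A root m splits the cubic as (x - m) q(x) with q(x) = a x^2 + B x + C, and its discriminant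
   is q(m)^2 times the discriminant B^2 - 4 a C of q.  When a d > 0 and m > 0, the constant
   term C = -d/m of q has sign opposite to a, so B^2 - 4 a C > 0. *)

definition cubic_discriminant :: "real \<Rightarrow> real \<Rightarrow> real \<Rightarrow> real \<Rightarrow> real" where
  "cubic_discriminant a b c d =
     b^2 * c^2 - 4 * a * c^3 - 4 * b^3 * d - 27 * a^2 * d^2 + 18 * a * b * c * d"

lemma cubic_discriminant_of_factored:
  "cubic_discriminant a (B - a * m) (C - B * m) (- m * C)
     = (a * m^2 + B * m + C)^2 * (B^2 - 4 * a * C)"
  unfolding cubic_discriminant_def by algebra

lemma cubic_discriminant_nonneg_if_pos_root:
  fixes a b c d m :: real
  assumes "a * d > 0" and "m > 0" and root: "a * m^3 + b * m^2 + c * m + d = 0"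
  shows "cubic_discriminant a b c d \<ge> 0"
proof -
  define B where "B = b + a * m"
  define C where "C = c + B * m"
  have d_eq: "d = - m * C"
    using root unfolding C_def B_def by algebra
  have "a * C < 0"
  proof -
    have "m * (a * C) = - (a * d)"
      unfolding d_eq by (simp only: mult_ac mult_minus_left mult_minus_right)
    then have "m * (a * C) < 0"
      using \<open>a * d > 0\<close> by linarith
    then show ?thesis using \<open>m > 0\<close> by (simp add: mult_less_0_iff)
  qed
  then have "B^2 - 4 * a * C \<ge> 0"
    using zero_le_power2[of B] by linarith
  moreover have "cubic_discriminant a b c d = (a * m^2 + B * m + C)^2 * (B^2 - 4 * a * C)"
    using cubic_discriminant_of_factored[of a B m C] d_eq
    by (simp add: B_def C_def)
  ultimately show ?thesis by simp
qed

theorem mainTheorem18: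
  fixes \<beta> \<delta> K \<mu> :: real
  assumes "\<beta> > 0" and "\<delta> > 0" and "K > 0" and "\<mu> > 0"
  shows "let s = \<mu> / \<delta>;
             a = 2 * \<beta>;
             b = 3 * \<beta> * s - K * \<beta>;
             c = 2 * \<beta> * s^2 + 2 * K * \<delta> - 2 * K * \<beta> * s;
             d = 4 * K * \<delta> * s;
             \<Delta> = b^2 * c^2 - 4 * a * c^3 - 4 * b^3 * d - 27 * a^2 * d^2 + 18 * a * b * c * d
         in \<Delta> < 0 \<longrightarrow> \<not> (\<exists>m::real. m > 0 \<and> a * m^3 + b * m^2 + c * m + d = 0)"
proof -
  have "(2 * \<beta>) * (4 * K * \<delta> * (\<mu> / \<delta>)) > 0"
    using assms by simp
  from cubic_discriminant_nonneg_if_pos_root[OF this]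
  show ?thesis
    unfolding Let_def cubic_discriminant_def by (meson not_le)
qed

end
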